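(* Let $(\Omega,\mathcal F,\mathbb P)$, $\mathnormal K$, $(\Omega_I,\mathcal F_I,\mathbb P_I)$, $\hat\Omega_I$, $\hat{\mathbb P}_I$ be as in the context, let $\{R_I: I\in\mathnormal K\}$ be events $R_I\in\mathcal F_I$ with $\mathbb P_I(R_I)>0$ for all $I$, and let $W$ be a random element of $\mathnormal K$. For $A\in\mathcal F$ define $A(I):=A\cap[W=I]$, $$\Phi_I(A):=\{\omega_1\in\hat\Omega_I:\ \mathbb P_I(A_{I,\omega_1})>0\}\times R_I,\qquad \Phi(A):=\bigcup_{I\in\mathnormal K}\Phi_I(A(I)),$$ $$\tilde\Phi(A):=\bigcup_{I\in\mathnormal K}\big[\{\omega_1\in\hat\Omega_I:\ A(I)_{I,\omega_1}\ne\emptyset\}\times R_I\big].$$ Then for each $A\in\mathcal F$, $\Phi(A)\in\mathcal F$ and $\Phi(A)\subseteq\tilde\Phi(A)$. Furthermore, if $\mathbb P(A)>0$ then $\mathbb P(\Phi(A))>0$.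
   Context: Construction of the probability space: let $\mathbf u_1,\mathbf u_2,\dots$ be an enumeration of $\mathbb Z^2$ and $\mathbf B_k:=\mathbf u_k+[-1/2,1/2]^2$. Let $N_k$ ($k\ge1$) be i.i.d. Poisson random variables of mean $1$; $U_{k,l}$ ($l\ge1$) independent random points with $U_{k,l}$ uniform in $\mathbf B_k$; and $\tau^{m,n}_{k,l}$ (for $l\ge1$, $m\ge k$, $n\ge1$, with $n>l$ when $m=k$) i.i.d. nonnegative random variables with distribution $\mathbb F$; all these collections are independent. The Poisson process consists of the points $U_{k,1},\dots,U_{k,N_k}$, $k\ge1$, and the edge $(U_{k,l},U_{m,n})$ of the Delaunay triangulation (with $m>k$, or $m=k$ and $n>l$) receives passage time $\tau^{m,n}_{k,l}$. $(\Omega,\mathcal F,\mathbb P)$ is the product over $k$ of the probability spaces $(\Omega^k,\mathcal F^k,\mathbb P^k)$ induced by $N_k$, $(U_{k,l})_l$ and $(\tau^{m,n}_{k,l})$. $\mathnormal K$ is the collection of finite sequences $I=((k_j,l_j,m_j,n_j))_{j=1,\dots,q}\in(\mathbb N^4)^q$, $q\ge1$, with pairwise distinct entries, $k_1\le\dots\le k_q$, and for each $j$ either $k_j<m_j$ or $l_j<n_j$. For $I\in\mathnormal K$, $(\Omega_I,\mathcal F_I,\mathbb P_I)$ is the probability space induced by the random vector $(\tau^{m_j,n_j}_{k_j,l_j})_{j=1,\dots,q}$ (so $\Omega_I=\mathbb R^q$), and each $\omega\in\Omega$ is written $\omega=(\omega_1,\omega_2)$ with $\omega_2\in\Omega_I$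 its $I$-coordinates and $\omega_1$ the remaining coordinates; $\hat\Omega_I:=\{\omega_1:\ \exists\,\omega_2\in\Omega_I,\ (\omega_1,\omega_2)\in\Omega\}$ with $\hat{\mathbb P}_I$ the law of $\mathbb P$ restricted to these coordinates. For $A\subseteq\Omega$ and $\omega_1\in\hat\Omega_I$, $A_{I,\omega_1}:=\{\omega_2\in\Omega_I:\ (\omega_1,\omega_2)\in A\}$. *)

theory Defs
  imports "HOL-Probability.Probability"
begin

text \<open>Index of a passage time tau^{m,n}_{k,l}: the tuple (k,l,m,n).\<close>
type_synonym tidx = "nat \<times> nat \<times> nat \<times> nat"

text \<open>Sample points: (N, U, tau) with N k = N_k, U (k,l) = U_{k,l}, tau (k,l,m,n) = tau^{m,n}_{k,l}.\<close>
type_synonym omega = "(nat \<Rightarrow> nat) \<times> ((nat \<times> nat) \<Rightarrow> real \<times> real) \<times> (tidx \<Rightarrow> real)"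

definition U_index :: "(nat \<times> nat) set" where
  "U_index = {(k, l). 1 \<le> k \<and> 1 \<le> l}"

definition tau_index :: "tidx set" where
  "tau_index = {(k, l, m, n). 1 \<le> k \<and> 1 \<le> l \<and> 1 \<le> n \<and> k \<le> m \<and> (m = k \<longrightarrow> l < n)}"

definition box_B :: "(nat \<Rightarrow> int \<times> int) \<Rightarrow> nat \<Rightarrow> (real \<times> real) set" where
  "box_B u k = cbox (of_int (fst (u k)) - 1/2, of_int (snd (u k)) - 1/2)
                    (of_int (fst (u k)) + 1/2, of_int (snd (u k)) + 1/2)"

definition Omega :: "(nat \<Rightarrow> int \<times> int) \<Rightarrow> real measure \<Rightarrow> omega measure" where
  "Omega u F =
     (\<Pi>\<^sub>M k\<in>{1..}. measure_pmf (poisson_pmf 1)) \<Otimes>\<^sub>M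
     ((\<Pi>\<^sub>M kl\<in>U_index. uniform_measure lborel (box_B u (fst kl))) \<Otimes>\<^sub>M
      (\<Pi>\<^sub>M c\<in>tau_index. F))"

definition Kset :: "tidx list set" where
  "Kset = {I. I \<noteq> [] \<and> distinct I \<and> set I \<subseteq> tau_index \<and> sorted (map fst I)}"

text \<open>(Omega_I, F_I, P_I): law of the random vector (tau_{I_j})_{j<q}, i.e. F^q on R^q.\<close>
definition PI :: "real measure \<Rightarrow> tidx list \<Rightarrow> (nat \<Rightarrow> real) measure" where
  "PI F I = (\<Pi>\<^sub>M j\<in>{..<length I}. F)"

definition split1 :: "tidx list \<Rightarrow> omega \<Rightarrow> omega" where
  "split1 I w = (fst w, fst (snd w), restrict (snd (snd w)) (tau_index - set I))"

definition split2 :: "tidx list \<Rightarrow> omega \<Rightarrow> (nat \<Rightarrow> real)" where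
  "split2 I w = (\<lambda>j\<in>{..<length I}. snd (snd w) (I ! j))"

definition glue :: "tidx list \<Rightarrow> omega \<Rightarrow> (nat \<Rightarrow> real) \<Rightarrow> omega" where
  "glue I w1 w2 = (fst w1, fst (snd w1),
     (\<lambda>c. if c \<in> set I then w2 (THE j. j < length I \<and> I ! j = c) else snd (snd w1) c))"

definition hatOmega :: "omega measure \<Rightarrow> tidx list \<Rightarrow> omega set" where
  "hatOmega M I = split1 I ` space M"

definition sect :: "real measure \<Rightarrow> tidx list \<Rightarrow> omega set \<Rightarrow> omega \<Rightarrow> (nat \<Rightarrow> real) set" where
  "sect F I A w1 = {w2 \<in> space (PI F I). glue I w1 w2 \<in> A}"

definition PhiI :: "omega measure \<Rightarrow> real measure \<Rightarrow> (tidx list \<Rightarrow> (nat \<Rightarrow> real) set)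
    \<Rightarrow> tidx list \<Rightarrow> omega set \<Rightarrow> omega set" where
  "PhiI M F R I A = (\<lambda>(w1, w2). glue I w1 w2) `
     ({w1 \<in> hatOmega M I. measure (PI F I) (sect F I A w1) > 0} \<times> R I)"

definition restrW :: "omega measure \<Rightarrow> (omega \<Rightarrow> tidx list) \<Rightarrow> omega set \<Rightarrow> tidx list \<Rightarrow> omega set" where
  "restrW M W A I = A \<inter> {w \<in> space M. W w = I}"

definition Phi :: "omega measure \<Rightarrow> real measure \<Rightarrow> (tidx list \<Rightarrow> (nat \<Rightarrow> real) set)
    \<Rightarrow> (omega \<Rightarrow> tidx list) \<Rightarrow> omega set \<Rightarrow> omega set" where
  "Phi M F R W A = (\<Union>I\<in>Kset. PhiI M F R I (restrW M W A I))"

definition Phitilde :: "omega measure \<Rightarrow> real measure \<Rightarrow> (tidx list \<Rightarrow> (nat \<Rightarrow> real) set)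
    \<Rightarrow> (omega \<Rightarrow> tidx list) \<Rightarrow> omega set \<Rightarrow> omega set" where
  "Phitilde M F R W A = (\<Union>I\<in>Kset. (\<lambda>(w1, w2). glue I w1 w2) `
     ({w1 \<in> hatOmega M I. sect F I (restrW M W A I) w1 \<noteq> {}} \<times> R I))"

end

theory Submission
  imports Defs
begin

text \<open>
  Fix I in K and write a sample point as omega = (omega_1, omega_2), where omega_2 are the passage
  times indexed by I. Because P is a product measure, this splitting carries P to hatP_I (x) P_I:
  merging the infinite product over the other passage times with the product over set I gives back
  the product over all passage times, and the latter factor is P_I re-indexed along the list I.
  By Tonelli, P(B) is the hatP_I-integral of P_I(B_{I,omega_1}). Hence Phi_I(B) = S x R_I with
  S = {omega_1. P_I(B_{I,omega_1}) > 0} is an event of probability hatP_I(S) P_I(R_I), which is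
  positive when P(B) > 0. As K is countable and A is the union of the A(I), some A(I) has positive
  probability if A has, and Phi(A) contains Phi_I(A(I)). Finally Phi(A) is contained in
  Phitilde(A) because a set of positive measure is non-empty.
\<close>

lemma distr_merge_PiM:
  assumes M: "\<And>i. i \<in> J \<union> K \<Longrightarrow> prob_space (M i)" and JK: "J \<inter> K = {}"
  shows "distr (Pi\<^sub>M J M \<Otimes>\<^sub>M Pi\<^sub>M K M) (Pi\<^sub>M (J \<union> K) M) (merge J K) = Pi\<^sub>M (J \<union> K) M"
    (is "distr ?P ?U _ = ?U")
proof (rule measure_eqI_PiM_infinite[symmetric, OF refl])
  interpret U: prob_space ?U using M by (intro prob_space_PiM) auto
  interpret K: prob_space "Pi\<^sub>M K M" using M by (intro prob_space_PiM) auto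
  show "finite_measure ?U" by unfold_locales
  fix L A assume L: "finite L" "L \<subseteq> J \<union> K" and A: "\<And>i. i \<in> L \<Longrightarrow> A i \<in> sets (M i)"
  let ?X = "prod_emb (J \<union> K) M L (Pi\<^sub>E L A)"
  let ?XJ = "prod_emb J M (L \<inter> J) (Pi\<^sub>E (L \<inter> J) A)"
  let ?XK = "prod_emb K M (L \<inter> K) (Pi\<^sub>E (L \<inter> K) A)"
  have "merge J K -` ?X \<inter> space ?P = ?XJ \<times> ?XK"
  proof (intro set_eqI iffI)
    fix p assume "p \<in> merge J K -` ?X \<inter> space ?P"
    then show "p \<in> ?XJ \<times> ?XK"
      using JK by (cases p) (auto simp: prod_emb_def space_pair_measure space_PiM PiE_iff)
  next
    fix p assume "p \<in> ?XJ \<times> ?XK"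
    then show "p \<in> merge J K -` ?X \<inter> space ?P"
      using JK L by (cases p) (auto simp: prod_emb_def space_pair_measure space_PiM PiE_iff split_merge)
  qed
  then have "distr ?P ?U (merge J K) ?X = ?P (?XJ \<times> ?XK)"
    using L A by (simp add: emeasure_distr sets_PiM_I)
  also have "\<dots> = Pi\<^sub>M J M ?XJ * Pi\<^sub>M K M ?XK"
    using L A by (intro K.emeasure_pair_measure_Times sets_PiM_I) auto
  also have "\<dots> = (\<Prod>i\<in>L \<inter> J. M i (A i)) * (\<Prod>i\<in>L \<inter> K. M i (A i))"
    using L A M by (subst (1 2) emeasure_PiM_emb) auto
  also have "\<dots> = (\<Prod>i\<in>L. M i (A i))"
    using L JK by (subst prod.union_disjoint[symmetric]) (auto intro!: prod.cong)
  also have "\<dots> = ?U ?X"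
    using L A M by (intro emeasure_PiM_emb[symmetric]) auto
  finally show "?U ?X = distr ?P ?U (merge J K) ?X" ..
qed simp

text \<open>The lookup used in \<^const>\<open>glue\<close>; unspecified for \<open>x \<notin> set xs\<close>.\<close>

definition list_position :: "'a list \<Rightarrow> 'a \<Rightarrow> nat" where
  "list_position xs x = (THE j. j < length xs \<and> xs ! j = x)"

lemma list_position_nth: "distinct xs \<Longrightarrow> j < length xs \<Longrightarrow> list_position xs (xs ! j) = j"
  unfolding list_position_def by (rule the_equality) (auto simp: nth_eq_iff_index_eq)

lemma list_position:
  "distinct xs \<Longrightarrow> x \<in> set xs \<Longrightarrow> list_position xs x < length xs \<and> xs ! list_position xs x = x"
  by (metis list_position_nth in_set_conv_nth)

lemma distr_PiM_split_list:
  assumes F: "prob_space F" and I: "distinct I" "set I \<subseteq> T"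
  defines "g \<equiv> \<lambda>(t, w). merge (T - set I) (set I) (t, \<lambda>c\<in>set I. w (list_position I c))"
  shows "g \<in> measurable ((\<Pi>\<^sub>M c\<in>T - set I. F) \<Otimes>\<^sub>M (\<Pi>\<^sub>M j\<in>{..<length I}. F))
      (\<Pi>\<^sub>M c\<in>T. F)"
    and "distr ((\<Pi>\<^sub>M c\<in>T - set I. F) \<Otimes>\<^sub>M (\<Pi>\<^sub>M j\<in>{..<length I}. F)) (\<Pi>\<^sub>M c\<in>T. F) g
      = (\<Pi>\<^sub>M c\<in>T. F)"
proof -
  let ?TJ = "\<Pi>\<^sub>M c\<in>T - set I. F" and ?PI = "\<Pi>\<^sub>M j\<in>{..<length I}. F" and ?PS = "\<Pi>\<^sub>M c\<in>set I. F"
  let ?r = "\<lambda>w. \<lambda>c\<in>set I. w (list_position I c)"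
  let ?s = "\<lambda>p. (fst p, ?r (snd p))"
  interpret PS: prob_space ?PS using F by (rule prob_space_PiM)
  have pos: "list_position I \<in> set I \<rightarrow> {..<length I}" and "inj_on (list_position I) (set I)"
    using list_position[OF I(1)] by (auto intro: inj_on_inverseI)
  then have reindex: "distr ?PI ?PS ?r = ?PS"
    using distr_PiM_reindex[of "{..<length I}" "\<lambda>_. F" "list_position I" "set I"] F by simp
  have r: "?r \<in> measurable ?PI ?PS"
    using pos by (intro measurable_restrict measurable_component_singleton) auto
  have s: "?s \<in> measurable (?TJ \<Otimes>\<^sub>M ?PI) (?TJ \<Otimes>\<^sub>M ?PS)"
    using r by (intro measurable_Pair measurable_fst measurable_compose[OF measurable_snd])
  have pair: "distr (?TJ \<Otimes>\<^sub>M ?PI) (?TJ \<Otimes>\<^sub>M ?PS) ?s = ?TJ \<Otimes>\<^sub>M ?PS"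
    using pair_measure_distr[OF measurable_ident_sets[of ?TJ ?TJ, OF refl] r] reindex PS.sigma_finite_measure
    by (simp add: case_prod_beta')
  have TU: "T - set I \<union> set I = T"
    using I(2) by blast
  have merge: "merge (T - set I) (set I) \<in> measurable (?TJ \<Otimes>\<^sub>M ?PS) (\<Pi>\<^sub>M c\<in>T. F)"
    using measurable_merge[of "T - set I" "set I" "\<lambda>_. F"] unfolding TU .
  have g: "g = merge (T - set I) (set I) \<circ> ?s"
    by (simp add: g_def fun_eq_iff)
  show "g \<in> measurable (?TJ \<Otimes>\<^sub>M ?PI) (\<Pi>\<^sub>M c\<in>T. F)"
    unfolding g using s merge by (rule measurable_comp)
  have "distr (?TJ \<Otimes>\<^sub>M ?PI) (\<Pi>\<^sub>M c\<in>T. F) g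
      = distr (?TJ \<Otimes>\<^sub>M ?PS) (\<Pi>\<^sub>M c\<in>T. F) (merge (T - set I) (set I))"
    unfolding g distr_distr[OF merge s, symmetric] pair ..
  also have "\<dots> = (\<Pi>\<^sub>M c\<in>T. F)"
    using F distr_merge_PiM[of "T - set I" "set I" "\<lambda>_. F"] unfolding TU by blast
  finally show "distr (?TJ \<Otimes>\<^sub>M ?PI) (\<Pi>\<^sub>M c\<in>T. F) g = (\<Pi>\<^sub>M c\<in>T. F)" .
qed

lemma nn_integral_pair_measure_pair:
  assumes N: "sigma_finite_measure N" and L: "sigma_finite_measure L"
    and f: "f \<in> borel_measurable (M \<Otimes>\<^sub>M (N \<Otimes>\<^sub>M L))"
  shows "(\<integral>\<^sup>+ x. f x \<partial>(M \<Otimes>\<^sub>M (N \<Otimes>\<^sub>M L)))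
    = (\<integral>\<^sup>+ a. \<integral>\<^sup>+ b. \<integral>\<^sup>+ c. f (a, b, c) \<partial>L \<partial>N \<partial>M)"
proof -
  interpret L: sigma_finite_measure L by (fact L)
  have "(\<integral>\<^sup>+ x. f x \<partial>(M \<Otimes>\<^sub>M (N \<Otimes>\<^sub>M L)))
      = (\<integral>\<^sup>+ a. \<integral>\<^sup>+ y. f (a, y) \<partial>(N \<Otimes>\<^sub>M L) \<partial>M)"
    using f by (rule sigma_finite_measure.nn_integral_fst[symmetric, OF sigma_finite_pair_measure[OF N L]])
  also have "\<dots> = (\<integral>\<^sup>+ a. \<integral>\<^sup>+ b. \<integral>\<^sup>+ c. f (a, b, c) \<partial>L \<partial>N \<partial>M)"
    using f by (intro nn_integral_cong L.nn_integral_fst[symmetric] measurable_Pair2) auto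
  finally show ?thesis .
qed

lemma nn_integral_PiM_split_list:
  assumes F: "prob_space F" and I: "distinct I" "set I \<subseteq> T"
    and f: "f \<in> borel_measurable (\<Pi>\<^sub>M c\<in>T. F)"
  shows "(\<integral>\<^sup>+ t. f t \<partial>(\<Pi>\<^sub>M c\<in>T. F)) =
    (\<integral>\<^sup>+ t. \<integral>\<^sup>+ w. f (merge (T - set I) (set I) (t, \<lambda>c\<in>set I. w (list_position I c)))
      \<partial>(\<Pi>\<^sub>M j\<in>{..<length I}. F) \<partial>(\<Pi>\<^sub>M c\<in>T - set I. F))"
proof -
  let ?TJ = "\<Pi>\<^sub>M c\<in>T - set I. F" and ?PI = "\<Pi>\<^sub>M j\<in>{..<length I}. F"
  let ?g = "\<lambda>(t, w). merge (T - set I) (set I) (t, \<lambda>c\<in>set I. w (list_position I c))"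
  interpret PI: prob_space ?PI using F by (rule prob_space_PiM)
  note g = distr_PiM_split_list[OF F I]
  have "(\<integral>\<^sup>+ t. f t \<partial>(\<Pi>\<^sub>M c\<in>T. F))
      = (\<integral>\<^sup>+ t. f t \<partial>distr (?TJ \<Otimes>\<^sub>M ?PI) (\<Pi>\<^sub>M c\<in>T. F) ?g)"
    by (simp only: g(2))
  also have "\<dots> = (\<integral>\<^sup>+ p. f (?g p) \<partial>(?TJ \<Otimes>\<^sub>M ?PI))"
    using g(1) f by (intro nn_integral_distr) simp_all
  also have "\<dots> = (\<integral>\<^sup>+ t. \<integral>\<^sup>+ w. f (?g (t, w)) \<partial>?PI \<partial>?TJ)"
    using measurable_comp[OF g(1) f] unfolding comp_def by (rule PI.nn_integral_fst[symmetric])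
  finally show ?thesis by simp
qed

abbreviation poisson_counts :: "(nat \<Rightarrow> nat) measure" where
  "poisson_counts \<equiv> \<Pi>\<^sub>M k\<in>{1..}. measure_pmf (poisson_pmf 1)"

abbreviation uniform_points :: "(nat \<Rightarrow> int \<times> int) \<Rightarrow> (nat \<times> nat \<Rightarrow> real \<times> real) measure" where
  "uniform_points u \<equiv> \<Pi>\<^sub>M kl\<in>U_index. uniform_measure lborel (box_B u (fst kl))"

abbreviation passage_times :: "real measure \<Rightarrow> tidx set \<Rightarrow> (tidx \<Rightarrow> real) measure" where
  "passage_times F T \<equiv> \<Pi>\<^sub>M c\<in>T. F"

abbreviation hatP :: "(nat \<Rightarrow> int \<times> int) \<Rightarrow> real measure \<Rightarrow> tidx list \<Rightarrow> omega measure" where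
  "hatP u F I \<equiv> poisson_counts \<Otimes>\<^sub>M (uniform_points u \<Otimes>\<^sub>M passage_times F (tau_index - set I))"

lemma prob_space_uniform_points: "prob_space (uniform_points u)"
proof (intro prob_space_PiM prob_space_uniform_measure)
  fix kl
  have "emeasure lborel (box_B u (fst kl)) = 1"
    by (simp add: box_B_def emeasure_lborel_cbox_eq Basis_prod_def inner_prod_def)
  then show "emeasure lborel (box_B u (fst kl)) \<noteq> 0" "emeasure lborel (box_B u (fst kl)) \<noteq> \<infinity>"
    by simp_all
qed

lemma prob_space_Omega: "prob_space F \<Longrightarrow> prob_space (Omega u F)"
  unfolding Omega_def
  by (intro prob_space_pair prob_space_PiM prob_space_measure_pmf prob_space_uniform_points)

lemma prob_space_PI: "prob_space F \<Longrightarrow> prob_space (PI F I)"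
  unfolding PI_def by (rule prob_space_PiM)

lemma glue_eq_merge:
  "t \<in> extensional (tau_index - set I) \<Longrightarrow>
    glue I (a, b, t) w = (a, b, merge (tau_index - set I) (set I) (t, \<lambda>c\<in>set I. w (list_position I c)))"
  by (auto simp: glue_def merge_def list_position_def extensional_def fun_eq_iff)

locale split_coordinates =
  fixes u :: "nat \<Rightarrow> int \<times> int" and F :: "real measure" and I :: "tidx list"
  assumes prob_F: "prob_space F" and distinct_I: "distinct I" and I_tau: "set I \<subseteq> tau_index"
begin

sublocale PI: prob_space "PI F I" using prob_F by (rule prob_space_PI)

lemma measurable_glue: "(\<lambda>(w1, w2). glue I w1 w2) \<in> measurable (hatP u F I \<Otimes>\<^sub>M PI F I) (Omega u F)"
proof (rule measurable_cong[THEN iffD2])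
  let ?g = "\<lambda>(t, w). merge (tau_index - set I) (set I) (t, \<lambda>c\<in>set I. w (list_position I c))"
  show "(\<lambda>p. (fst (fst p), fst (snd (fst p)), ?g (snd (snd (fst p)), snd p)))
      \<in> measurable (hatP u F I \<Otimes>\<^sub>M PI F I) (Omega u F)"
    unfolding Omega_def
    by (intro measurable_Pair measurable_compose[OF _ distr_PiM_split_list(1)[OF prob_F distinct_I I_tau]]) (auto simp: PI_def)
  fix p assume "p \<in> space (hatP u F I \<Otimes>\<^sub>M PI F I)"
  then show "(\<lambda>(w1, w2). glue I w1 w2) p = (fst (fst p), fst (snd (fst p)), ?g (snd (snd (fst p)), snd p))"
    by (auto simp: space_pair_measure space_PiM PiE_def glue_eq_merge split: prod.splits)
qed

lemma nn_integral_Omega_glue: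
  assumes f: "f \<in> borel_measurable (Omega u F)"
  shows "(\<integral>\<^sup>+ w. f w \<partial>Omega u F)
    = (\<integral>\<^sup>+ w1. \<integral>\<^sup>+ w2. f (glue I w1 w2) \<partial>PI F I \<partial>hatP u F I)"
proof -
  let ?TT = "passage_times F tau_index" and ?TJ = "passage_times F (tau_index - set I)"
  interpret U: prob_space "uniform_points u" by (rule prob_space_uniform_points)
  interpret TT: prob_space ?TT using prob_F by (rule prob_space_PiM)
  interpret TJ: prob_space ?TJ using prob_F by (rule prob_space_PiM)
  have inner: "(\<integral>\<^sup>+ t. f (a, b, t) \<partial>?TT)
      = (\<integral>\<^sup>+ t. \<integral>\<^sup>+ w. f (glue I (a, b, t) w) \<partial>PI F I \<partial>?TJ)"
    if "a \<in> space poisson_counts" "b \<in> space (uniform_points u)" for a b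
  proof -
    have "(\<lambda>t. f (a, b, t)) \<in> borel_measurable ?TT"
      using f that unfolding Omega_def by (intro measurable_Pair2) (auto intro: measurable_Pair2)
    then have "(\<integral>\<^sup>+ t. f (a, b, t) \<partial>?TT) = (\<integral>\<^sup>+ t. \<integral>\<^sup>+ w. f (a, b,
        merge (tau_index - set I) (set I) (t, \<lambda>c\<in>set I. w (list_position I c))) \<partial>PI F I \<partial>?TJ)"
      unfolding PI_def by (rule nn_integral_PiM_split_list[OF prob_F distinct_I I_tau])
    also have "\<dots> = (\<integral>\<^sup>+ t. \<integral>\<^sup>+ w. f (glue I (a, b, t) w) \<partial>PI F I \<partial>?TJ)"
      by (intro nn_integral_cong) (simp add: glue_eq_merge space_PiM PiE_def)
    finally show ?thesis .
  qed
  have h: "(\<lambda>w1. \<integral>\<^sup>+ w2. f (glue I w1 w2) \<partial>PI F I) \<in> borel_measurable (hatP u F I)"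
    using measurable_comp[OF measurable_glue f]
    by (intro PI.borel_measurable_nn_integral) (simp add: comp_def case_prod_beta')
  have "(\<integral>\<^sup>+ w. f w \<partial>Omega u F)
      = (\<integral>\<^sup>+ a. \<integral>\<^sup>+ b. \<integral>\<^sup>+ t. f (a, b, t) \<partial>?TT \<partial>uniform_points u \<partial>poisson_counts)"
    using f unfolding Omega_def
    by (intro nn_integral_pair_measure_pair U.sigma_finite_measure TT.sigma_finite_measure)
  also have "\<dots> = (\<integral>\<^sup>+ a. \<integral>\<^sup>+ b. \<integral>\<^sup>+ t. \<integral>\<^sup>+ w. f (glue I (a, b, t) w)
      \<partial>PI F I \<partial>?TJ \<partial>uniform_points u \<partial>poisson_counts)"
    by (intro nn_integral_cong inner) (simp_all add: space_pair_measure)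
  also have "\<dots> = (\<integral>\<^sup>+ w1. \<integral>\<^sup>+ w2. f (glue I w1 w2) \<partial>PI F I \<partial>hatP u F I)"
    using h by (intro nn_integral_pair_measure_pair[symmetric] U.sigma_finite_measure TJ.sigma_finite_measure)
  finally show ?thesis .
qed

lemma sect_eq_vimage_Pair:
  "sect F I B w1 = Pair w1 -` ((\<lambda>(w1, w2). glue I w1 w2) -` B \<inter> space (hatP u F I \<Otimes>\<^sub>M PI F I))"
  if "w1 \<in> space (hatP u F I)"
  using that by (auto simp: sect_def space_pair_measure)

lemma sets_sect:
  "B \<in> sets (Omega u F) \<Longrightarrow> w1 \<in> space (hatP u F I) \<Longrightarrow> sect F I B w1 \<in> sets (PI F I)"
  by (simp only: sect_eq_vimage_Pair) (rule sets_Pair1[OF measurable_sets[OF measurable_glue]])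

lemma borel_measurable_emeasure_sect:
  assumes "B \<in> sets (Omega u F)"
  shows "(\<lambda>w1. emeasure (PI F I) (sect F I B w1)) \<in> borel_measurable (hatP u F I)"
  using PI.measurable_emeasure_Pair[OF measurable_sets[OF measurable_glue assms]]
  by (rule measurable_cong[THEN iffD1, rotated]) (simp add: sect_eq_vimage_Pair)

lemma emeasure_Omega_sect:
  assumes B: "B \<in> sets (Omega u F)"
  shows "emeasure (Omega u F) B = (\<integral>\<^sup>+ w1. emeasure (PI F I) (sect F I B w1) \<partial>hatP u F I)"
proof -
  have "emeasure (Omega u F) B
      = (\<integral>\<^sup>+ w1. \<integral>\<^sup>+ w2. indicator B (glue I w1 w2) \<partial>PI F I \<partial>hatP u F I)"
    using B nn_integral_Omega_glue[of "indicator B"] by simp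
  also have "\<dots> = (\<integral>\<^sup>+ w1. emeasure (PI F I) (sect F I B w1) \<partial>hatP u F I)"
  proof (intro nn_integral_cong)
    fix w1 assume "w1 \<in> space (hatP u F I)"
    then have "emeasure (PI F I) (sect F I B w1) = (\<integral>\<^sup>+ w2. indicator (sect F I B w1) w2 \<partial>PI F I)"
      using B by (simp add: sets_sect)
    also have "\<dots> = (\<integral>\<^sup>+ w2. indicator B (glue I w1 w2) \<partial>PI F I)"
      by (intro nn_integral_cong) (simp add: sect_def indicator_def)
    finally show "(\<integral>\<^sup>+ w2. indicator B (glue I w1 w2) \<partial>PI F I) = emeasure (PI F I) (sect F I B w1)" ..
  qed
  finally show ?thesis .
qed

lemma glue_in_space:
  "w1 \<in> space (hatP u F I) \<Longrightarrow> w2 \<in> space (PI F I) \<Longrightarrow> glue I w1 w2 \<in> space (Omega u F)"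
  using measurable_space[OF measurable_glue, of "(w1, w2)"] by (simp add: space_pair_measure)

lemma measurable_split1: "split1 I \<in> measurable (Omega u F) (hatP u F I)"
  unfolding split1_def Omega_def
  by (intro measurable_Pair measurable_compose[OF measurable_snd] measurable_restrict_subset) auto

lemma measurable_split2: "split2 I \<in> measurable (Omega u F) (PI F I)"
  using I_tau unfolding split2_def Omega_def PI_def
  by (intro measurable_restrict measurable_compose[OF measurable_snd]
      measurable_compose[OF measurable_snd measurable_component_singleton]) auto

lemma split1_glue: "w1 \<in> space (hatP u F I) \<Longrightarrow> split1 I (glue I w1 w2) = w1"
  by (auto simp: split1_def glue_def space_pair_measure space_PiM PiE_def extensional_def fun_eq_iff)

lemma split2_glue: "w2 \<in> space (PI F I) \<Longrightarrow> split2 I (glue I w1 w2) = w2"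
  using distinct_I
  by (auto simp: split2_def glue_def PI_def space_PiM PiE_def extensional_def fun_eq_iff
      list_position_nth[unfolded list_position_def])

lemma glue_split: "w \<in> space (Omega u F) \<Longrightarrow> glue I (split1 I w) (split2 I w) = w"
  using list_position[OF distinct_I]
  by (auto simp: split1_def split2_def glue_def Omega_def space_pair_measure space_PiM PiE_def
      extensional_def fun_eq_iff list_position_def)

lemma hatOmega_eq_space: "hatOmega (Omega u F) I = space (hatP u F I)"
proof
  show "hatOmega (Omega u F) I \<subseteq> space (hatP u F I)"
    unfolding hatOmega_def using measurable_space[OF measurable_split1] by blast
  show "space (hatP u F I) \<subseteq> hatOmega (Omega u F) I"
  proof
    fix w1 assume w1: "w1 \<in> space (hatP u F I)"
    obtain w2 where "w2 \<in> space (PI F I)"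
      using PI.not_empty by blast
    with w1 show "w1 \<in> hatOmega (Omega u F) I"
      unfolding hatOmega_def by (metis glue_in_space split1_glue image_eqI)
  qed
qed

lemma glue_image_Times:
  assumes "S \<subseteq> space (hatP u F I)" and "R \<subseteq> space (PI F I)"
  shows "(\<lambda>(w1, w2). glue I w1 w2) ` (S \<times> R) = {w \<in> space (Omega u F). split1 I w \<in> S \<and> split2 I w \<in> R}"
proof (intro set_eqI iffI)
  fix w assume "w \<in> (\<lambda>(w1, w2). glue I w1 w2) ` (S \<times> R)"
  then show "w \<in> {w \<in> space (Omega u F). split1 I w \<in> S \<and> split2 I w \<in> R}"
    using assms by (auto simp: glue_in_space split1_glue split2_glue subsetD)
next
  fix w assume "w \<in> {w \<in> space (Omega u F). split1 I w \<in> S \<and> split2 I w \<in> R}"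
  then show "w \<in> (\<lambda>(w1, w2). glue I w1 w2) ` (S \<times> R)"
    by (force simp: glue_split intro: image_eqI[of _ _ "(split1 I w, split2 I w)"])
qed

lemma
  assumes S: "S \<in> sets (hatP u F I)" and R: "R \<in> sets (PI F I)"
  shows sets_glue_image_Times: "(\<lambda>(w1, w2). glue I w1 w2) ` (S \<times> R) \<in> sets (Omega u F)"
    and emeasure_glue_image_Times:
      "emeasure (Omega u F) ((\<lambda>(w1, w2). glue I w1 w2) ` (S \<times> R)) = emeasure (hatP u F I) S * emeasure (PI F I) R"
proof -
  let ?G = "(\<lambda>(w1, w2). glue I w1 w2) ` (S \<times> R)"
  have G: "?G = (split1 I -` S \<inter> space (Omega u F)) \<inter> (split2 I -` R \<inter> space (Omega u F))"
    using S R by (auto simp: glue_image_Times sets.sets_into_space)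
  show sets: "?G \<in> sets (Omega u F)"
    unfolding G using measurable_sets[OF measurable_split1 S] measurable_sets[OF measurable_split2 R] ..
  have Ssp: "S \<subseteq> space (hatP u F I)" and Rsp: "R \<subseteq> space (PI F I)"
    using S R by (simp_all add: sets.sets_into_space)
  have sect: "sect F I ?G w1 = (if w1 \<in> S then R else {})" if w1: "w1 \<in> space (hatP u F I)" for w1
  proof -
    have "sect F I ?G w1 = {w2 \<in> space (PI F I). glue I w1 w2 \<in> space (Omega u F)
        \<and> split1 I (glue I w1 w2) \<in> S \<and> split2 I (glue I w1 w2) \<in> R}"
      by (simp add: sect_def glue_image_Times[OF Ssp Rsp])
    also have "\<dots> = {w2 \<in> space (PI F I). w1 \<in> S \<and> w2 \<in> R}"
      using w1 by (auto simp: glue_in_space split1_glue split2_glue)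
    finally show ?thesis
      using Rsp by auto
  qed
  have "emeasure (Omega u F) ?G = (\<integral>\<^sup>+ w1. emeasure (PI F I) R * indicator S w1 \<partial>hatP u F I)"
    unfolding emeasure_Omega_sect[OF sets] by (intro nn_integral_cong) (simp add: sect)
  also have "\<dots> = emeasure (hatP u F I) S * emeasure (PI F I) R"
    by (subst nn_integral_cmult_indicator[OF S]) (rule mult.commute)
  finally show "emeasure (Omega u F) ?G = emeasure (hatP u F I) S * emeasure (PI F I) R" .
qed

lemma sets_positive_sect:
  assumes "B \<in> sets (Omega u F)"
  shows "{w1 \<in> space (hatP u F I). 0 < measure (PI F I) (sect F I B w1)} \<in> sets (hatP u F I)"
proof -
  have [measurable]: "(\<lambda>w1. measure (PI F I) (sect F I B w1)) \<in> borel_measurable (hatP u F I)"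
    unfolding measure_def using borel_measurable_emeasure_sect[OF assms] by measurable
  show ?thesis by measurable
qed

lemma emeasure_positive_sect_nonzero:
  assumes B: "B \<in> sets (Omega u F)" and "emeasure (Omega u F) B \<noteq> 0"
  shows "emeasure (hatP u F I) {w1 \<in> space (hatP u F I). 0 < measure (PI F I) (sect F I B w1)} \<noteq> 0"
proof
  let ?S = "{w1 \<in> space (hatP u F I). 0 < measure (PI F I) (sect F I B w1)}"
  assume "emeasure (hatP u F I) ?S = 0"
  then have "?S \<in> null_sets (hatP u F I)"
    using sets_positive_sect[OF B] by (simp add: null_sets_def)
  then have "AE w1 in hatP u F I. w1 \<notin> ?S"
    by (rule AE_not_in)
  with AE_space have "AE w1 in hatP u F I. emeasure (PI F I) (sect F I B w1) = 0"
    by eventually_elim (auto simp: PI.emeasure_eq_measure not_less measure_nonneg intro!: antisym)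
  then have "emeasure (Omega u F) B = 0"
    unfolding emeasure_Omega_sect[OF B] nn_integral_0_iff_AE[OF borel_measurable_emeasure_sect[OF B]] .
  with assms(2) show False ..
qed

lemma sets_PhiI:
  "R I \<in> sets (PI F I) \<Longrightarrow> B \<in> sets (Omega u F) \<Longrightarrow> PhiI (Omega u F) F R I B \<in> sets (Omega u F)"
  unfolding PhiI_def hatOmega_eq_space by (intro sets_glue_image_Times sets_positive_sect)

lemma emeasure_PhiI_nonzero:
  assumes "R I \<in> sets (PI F I)" "0 < measure (PI F I) (R I)"
    and "B \<in> sets (Omega u F)" "emeasure (Omega u F) B \<noteq> 0"
  shows "emeasure (Omega u F) (PhiI (Omega u F) F R I B) \<noteq> 0"
  using assms emeasure_glue_image_Times[OF sets_positive_sect[OF assms(3)] assms(1)]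
    emeasure_positive_sect_nonzero[OF assms(3,4)]
  unfolding PhiI_def hatOmega_eq_space by (simp add: PI.emeasure_eq_measure)

end

lemma Phi_subset_Phitilde: "Phi M F R W A \<subseteq> Phitilde M F R W A"
  unfolding Phi_def Phitilde_def PhiI_def by (intro UN_mono image_mono Sigma_mono) auto

lemma sets_restrW:
  assumes W: "W \<in> measurable M (count_space K)" and A: "A \<in> sets M"
  shows "restrW M W A I \<in> sets M"
proof -
  have "{w \<in> space M. W w = I} = W -` ({I} \<inter> K) \<inter> space M"
    using measurable_space[OF W] by auto
  then show ?thesis
    unfolding restrW_def using A measurable_sets[OF W, of "{I} \<inter> K"] by auto
qed

lemma ex_emeasure_restrW_nonzero:
  assumes K: "countable K" and W: "W \<in> measurable M (count_space K)"
    and A: "A \<in> sets M" "emeasure M A \<noteq> 0"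
  shows "\<exists>I\<in>K. emeasure M (restrW M W A I) \<noteq> 0"
proof (rule ccontr)
  assume "\<not> ?thesis"
  then have "(\<Union>I\<in>K. restrW M W A I) \<in> null_sets M"
    using W A(1) by (intro null_sets_UN'[OF K]) (auto simp: null_sets_def sets_restrW)
  moreover have "A = (\<Union>I\<in>K. restrW M W A I)"
    using measurable_space[OF W] sets.sets_into_space[OF A(1)] by (auto simp: restrW_def)
  ultimately have "A \<in> null_sets M"
    by simp
  with A(2) show False
    by (simp add: null_sets_def)
qed

lemma countable_Kset: "countable Kset"
  by (rule countable_subset[OF subset_UNIV]) simp

lemma split_coordinates_Kset: "prob_space F \<Longrightarrow> I \<in> Kset \<Longrightarrow> split_coordinates F I"
  by (simp add: split_coordinates_def Kset_def)

context
  fixes u F R W A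
  assumes F: "prob_space F" and R: "\<And>I. I \<in> Kset \<Longrightarrow> R I \<in> sets (PI F I)"
    and W: "W \<in> measurable (Omega u F) (count_space Kset)" and A: "A \<in> sets (Omega u F)"
begin

lemma sets_Phi: "Phi (Omega u F) F R W A \<in> sets (Omega u F)"
  unfolding Phi_def using countable_Kset
proof (rule sets.countable_UN'')
  fix I assume I: "I \<in> Kset"
  show "PhiI (Omega u F) F R I (restrW (Omega u F) W A I) \<in> sets (Omega u F)"
    using split_coordinates_Kset[OF F I] R[OF I] sets_restrW[OF W A] by (rule split_coordinates.sets_PhiI)
qed

lemma emeasure_Phi_nonzero:
  assumes R_pos: "\<And>I. I \<in> Kset \<Longrightarrow> 0 < measure (PI F I) (R I)" and "emeasure (Omega u F) A \<noteq> 0"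
  shows "emeasure (Omega u F) (Phi (Omega u F) F R W A) \<noteq> 0"
proof -
  obtain I where I: "I \<in> Kset" and AI: "emeasure (Omega u F) (restrW (Omega u F) W A I) \<noteq> 0"
    using ex_emeasure_restrW_nonzero[OF countable_Kset W A assms(2)] by blast
  have "emeasure (Omega u F) (PhiI (Omega u F) F R I (restrW (Omega u F) W A I)) \<noteq> 0"
    using split_coordinates_Kset[OF F I] R[OF I] R_pos[OF I] sets_restrW[OF W A] AI
    by (rule split_coordinates.emeasure_PhiI_nonzero)
  moreover have "PhiI (Omega u F) F R I (restrW (Omega u F) W A I) \<subseteq> Phi (Omega u F) F R W A"
    unfolding Phi_def using I by blast
  then have "emeasure (Omega u F) (PhiI (Omega u F) F R I (restrW (Omega u F) W A I))
      \<le> emeasure (Omega u F) (Phi (Omega u F) F R W A)"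
    using sets_Phi by (rule emeasure_mono)
  ultimately show ?thesis
    by (auto simp: le_zero_eq)
qed

end

theorem lemma1:
  fixes u :: "nat \<Rightarrow> int \<times> int" and F :: "real measure"
    and R :: "tidx list \<Rightarrow> (nat \<Rightarrow> real) set" and W :: "omega \<Rightarrow> tidx list"
    and A :: "omega set"
  assumes "bij_betw u {1..} UNIV"
    and "prob_space F" and "sets F = sets borel" and "AE x in F. 0 \<le> x"
    and "\<forall>I\<in>Kset. R I \<in> sets (PI F I) \<and> measure (PI F I) (R I) > 0"
    and "W \<in> measurable (Omega u F) (count_space Kset)"
    and "A \<in> sets (Omega u F)"
  shows "Phi (Omega u F) F R W A \<in> sets (Omega u F)
    \<and> Phi (Omega u F) F R W A \<subseteq> Phitilde (Omega u F) F R W A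
    \<and> (measure (Omega u F) A > 0 \<longrightarrow> measure (Omega u F) (Phi (Omega u F) F R W A) > 0)"
proof -
  interpret prob_space "Omega u F" using assms(2) by (rule prob_space_Omega)
  have R: "R I \<in> sets (PI F I)" "0 < measure (PI F I) (R I)" if "I \<in> Kset" for I
    using assms(5) that by auto
  show ?thesis
    using sets_Phi[OF assms(2) R(1) assms(6,7)] emeasure_Phi_nonzero[OF assms(2) R(1) assms(6,7) R(2)]
      Phi_subset_Phitilde
    by (simp add: emeasure_eq_measure zero_less_measure_iff)
qed

end
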